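(* Let $i\in\mathcal N$, let $\mathbf l_i$ be an $m$-cell configuration of $i$, let $\ell\in\mathcal N_i$ and let $\mathbf l_\ell$ be any $m$-cell configuration of $\ell$ consistent with $\mathbf l_i$. Define $H_1(t):=Mt$ and, for $\kappa\ge2$, $H_\kappa(t):=\int_0^te^{L_2(t-s)}L_1\sqrt{N_{\max}}\,H_{\kappa-1}(s)\,ds$, $t\ge0$. Then $$|\chi_\ell^{[i]}(t)-\chi_\ell^{[\ell]}(t)|\le H_m(t)\quad\text{for all }t\in[0,t^*],$$ where $t^*$ is the unique positive solution of $e^{L_2t^*}-\big(L_2+\frac{L_2^2}{L_1\sqrt{N_{\max}}}\big)t^*-1=0$, $N_{\max}=\max_{i\in\mathcal N}N_i$, and $\chi_\ell^{[i]}$, $\chi_\ell^{[\ell]}$ are computed from $\mathbf l_i$ and $\mathbf l_\ell$ respectively.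
   Context: Graph notions: $\mathcal N=\{1,\dots,N\}$ is a finite set of agents, agent $i$ has neighbor set $\mathcal N_i\subset\mathcal N\setminus\{i\}$ of cardinality $N_i$; $\mathcal G=(\mathcal N,\mathcal E)$ with $(\ell,i)\in\mathcal E$ iff $\ell\in\mathcal N_i$; a path of length $m$ is a sequence $i_0\cdots i_m$ with $(i_{k-1},i_k)\in\mathcal E$. For $m\ge1$, $\mathcal N_i^m$ is the set of agents $j\ne i$ having a path of length $m$ to $i$ and no shorter path to $i$; $\mathcal N_i^0=\{i\}$; $\bar{\mathcal N}_i^m=\bigcup_{k=0}^m\mathcal N_i^k$, of cardinality $\bar N_i^m$. Dynamics: each agent has state $x_i\in\mathbb R^n$ and drift $f_i(x_i,\mathbf x_j)$, $\mathbf x_j=(x_{j_1},\dots,x_{j_{N_i}})$ listing the neighbors' states in a fixed order. There are constants $M,L_1,L_2>0$ with $|f_i(x_i,\mathbf x_j)|\le M$, $|f_i(x_i,\mathbf x_j)-f_i(x_i,\mathbf y_j)|\le L_1|\mathbf x_j-\mathbf y_j|$ and $|f_i(x_i,\mathbf x_j)-f_i(y_i,\mathbf x_j)|\le L_2|x_i-y_i|$ for all $x_i,y_i\in\mathbb R^n$, $\mathbf x_j,\mathbf y_j\in\mathbb R^{N_in}$, $i\in\mathcal N$. Cells and reference trajectories: a cell decomposition $\mathcal S=\{S_l\}_{l\in\mathcal I}$ of $\mathbb R^n$ ($\mathcal I$ finite or countable) is a family of uniformly bounded connected sets with pairwise disjoint interiors whose union is $\mathbb R^n$; a reference point $x_{l,G}\in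 S_l$ is fixed for each $l$. Fix the degree of decentralization $m\ge1$. An $m$-cell configuration of agent $i$ is a tuple $\mathbf l_i=(l_\kappa)_{\kappa\in\bar{\mathcal N}_i^m}\in\mathcal I^{\bar N_i^m}$. Given $\mathbf l_i$, define $\chi_\kappa^{[i]}:[0,\infty)\to\mathbb R^n$ for $\kappa\in\bar{\mathcal N}_i^m$ as follows. Case (i), $\mathcal N_i^{m+1}=\emptyset$: $\dot\chi_\kappa^{[i]}(t)=f_\kappa(\chi_\kappa^{[i]}(t),\boldsymbol\chi_{j(\kappa)}^{[i]}(t))$, $\chi_\kappa^{[i]}(0)=x_{l_\kappa,G}$, for all $\kappa\in\bar{\mathcal N}_i^m$, where $\boldsymbol\chi_{j(\kappa)}^{[i]}$ lists $\chi_\nu^{[i]}$, $\nu\in\mathcal N_\kappa$ (these $\nu$ lie in $\bar{\mathcal N}_i^m$). Case (ii), $\mathcal N_i^{m+1}\ne\emptyset$: the same ODE and initial conditions for $\kappa\in\bar{\mathcal N}_i^{m-1}$, while $\chi_\kappa^{[i]}(t):=x_{l_\kappa,G}$ for all $t\ge0$ and $\kappa\in\mathcal N_i^m$. For $\ell\in\mathcal N_i$, an $m$-cell configuration $\mathbf l_\ell=(\bar l_\kappa)_{\kappa\in\bar{\mathcal N}_\ell^m}$ of $\ell$ is consistent with $\mathbf l_i=(l_\kappa)_{\kappa\in\bar{\mathcal N}_i^m}$ if $l_\kappa=\bar l_\kappa$ for all $\kappa\in\bar{\mathcal N}_i^m\cap\bar{\mathcal N}_\ell^m$. *)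

theory Defs
  imports "HOL-Analysis.Analysis"
begin

text \<open>Agents are the elements of a finite type 'a (so the agent set is UNIV).
  nbr i is the neighbour set N_i; (l, i) is an edge iff l \<in> nbr i.\<close>

definition walk :: "('a \<Rightarrow> 'a set) \<Rightarrow> 'a \<Rightarrow> 'a \<Rightarrow> nat \<Rightarrow> bool" where
  "walk nbr j i k \<longleftrightarrow>
     (\<exists>p :: nat \<Rightarrow> 'a. p 0 = j \<and> p k = i \<and> (\<forall>q<k. p q \<in> nbr (p (Suc q))))"

definition layer :: "('a \<Rightarrow> 'a set) \<Rightarrow> 'a \<Rightarrow> nat \<Rightarrow> 'a set" where
  "layer nbr i m = (if m = 0 then {i}
     else {j. j \<noteq> i \<and> walk nbr j i m \<and> (\<forall>k<m. \<not> walk nbr j i k)})"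

definition nball :: "('a \<Rightarrow> 'a set) \<Rightarrow> 'a \<Rightarrow> nat \<Rightarrow> 'a set" where
  "nball nbr i m = (\<Union>k\<in>{..m}. layer nbr i k)"

definition cell_decomp :: "('c \<Rightarrow> 'v::euclidean_space set) \<Rightarrow> ('c \<Rightarrow> 'v) \<Rightarrow> bool" where
  "cell_decomp S xG \<longleftrightarrow>
     countable (UNIV :: 'c set) \<and>
     (\<exists>B. \<forall>l. \<forall>x\<in>S l. \<forall>y\<in>S l. dist x y \<le> B) \<and>
     (\<forall>l. connected (S l)) \<and>
     (\<forall>l l'. l \<noteq> l' \<longrightarrow> interior (S l) \<inter> interior (S l') = {}) \<and>
     (\<Union>l. S l) = UNIV \<and>
     (\<forall>l. xG l \<in> S l)"

definition ode_on ::
  "('a \<Rightarrow> 'v::euclidean_space \<Rightarrow> ('a \<Rightarrow> 'v) \<Rightarrow> 'v) \<Rightarrow> ('c \<Rightarrow> 'v) \<Rightarrow> ('a \<Rightarrow> 'c)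
     \<Rightarrow> 'a set \<Rightarrow> ('a \<Rightarrow> real \<Rightarrow> 'v) \<Rightarrow> bool" where
  "ode_on f xG cfg K chi \<longleftrightarrow>
     (\<forall>k\<in>K. chi k 0 = xG (cfg k) \<and>
        (\<forall>t\<ge>0. (chi k has_vector_derivative f k (chi k t) (\<lambda>v. chi v t)) (at t within {0..})))"

text \<open>chi is the family of reference trajectories chi^[i] computed from the m-cell
  configuration cfg of agent i (only the values of cfg on nball nbr i m matter).\<close>
definition ref_traj ::
  "('a \<Rightarrow> 'a set) \<Rightarrow> ('a \<Rightarrow> 'v::euclidean_space \<Rightarrow> ('a \<Rightarrow> 'v) \<Rightarrow> 'v) \<Rightarrow> ('c \<Rightarrow> 'v)
     \<Rightarrow> nat \<Rightarrow> 'a \<Rightarrow> ('a \<Rightarrow> 'c) \<Rightarrow> ('a \<Rightarrow> real \<Rightarrow> 'v) \<Rightarrow> bool" where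
  "ref_traj nbr f xG m i cfg chi \<longleftrightarrow>
     (if layer nbr i (Suc m) = {} then ode_on f xG cfg (nball nbr i m) chi
      else ode_on f xG cfg (nball nbr i (m - 1)) chi \<and>
           (\<forall>k\<in>layer nbr i m. \<forall>t\<ge>0. chi k t = xG (cfg k)))"

text \<open>H_1(t) = M t, H_{k+1}(t) = int_0^t e^{L2 (t-s)} L1 sqrt(Nmax) H_k(s) ds
  (the argument c stands for L1 * sqrt Nmax; H 0 is an unused dummy).\<close>
fun Hfun :: "real \<Rightarrow> real \<Rightarrow> real \<Rightarrow> nat \<Rightarrow> real \<Rightarrow> real" where
  "Hfun M L2 c 0 t = 0"
| "Hfun M L2 c (Suc 0) t = M * t"
| "Hfun M L2 c (Suc (Suc k)) t =
     integral {0..t} (\<lambda>s. exp (L2 * (t - s)) * c * Hfun M L2 c (Suc k) s)"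

end

theory Submission
  imports Defs
begin

text \<open>Let U be the set of agents lying in both m-balls and F \<subseteq> U the agents that are held
  at their reference point in at least one of the two views. On U - F both views solve the same
  ODE from the same initial point, and all neighbours of such an agent lie in U again. At a
  frozen agent the discrepancy is at most M t = H_1(t); each edge travelled away from F turns a
  bound H_k on the neighbours into the bound H_{k+1}, which is exactly the recursion defining H.
  These bounds are established for all agents of U at once by a Gronwall argument applied to the
  total excess of the discrepancies over their bounds. Agent l is at distance at least m - 1 from F,
  and the defining equation of t* makes k \<mapsto> H_k(t) nonincreasing on [0, t*], which gives H_m.\<close>

section \<open>The comparison functions H_k\<close>

lemma Hfun_Suc_Suc_eq:
  "Hfun M L2 c (Suc (Suc k)) t =
    c * exp (L2 * t) * integral {0..t} (\<lambda>s. exp (- (L2 * s)) * Hfun M L2 c (Suc k) s)"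
proof -
  have "integral {0..t} (\<lambda>s. exp (L2 * (t - s)) * c * Hfun M L2 c (Suc k) s)
      = integral {0..t} (\<lambda>s. (c * exp (L2 * t)) * (exp (- (L2 * s)) * Hfun M L2 c (Suc k) s))"
    by (rule integral_cong) (simp add: right_diff_distrib exp_diff exp_minus divide_inverse)
  then show ?thesis by simp
qed

lemma continuous_on_Hfun: "continuous_on {0..T} (Hfun M L2 c k)"
proof (induction k rule: induct_nat_012)
  case (ge2 k)
  have "continuous_on {0..T} (\<lambda>t. integral {0..t} (\<lambda>s. exp (- (L2 * s)) * Hfun M L2 c (Suc k) s))"
    by (rule continuous_on_vector_derivative[OF integral_has_vector_derivative])
      (intro continuous_intros ge2)
  then have "continuous_on {0..T} (\<lambda>t. c * exp (L2 * t) *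
      integral {0..t} (\<lambda>s. exp (- (L2 * s)) * Hfun M L2 c (Suc k) s))"
    by (intro continuous_intros)
  then show ?case by (simp only: Hfun_Suc_Suc_eq)
qed (auto intro: continuous_intros)

lemma Hfun_Suc_Suc_has_vector_derivative:
  assumes "t \<in> {0..T}"
  shows "(Hfun M L2 c (Suc (Suc k)) has_vector_derivative
           (L2 * Hfun M L2 c (Suc (Suc k)) t + c * Hfun M L2 c (Suc k) t)) (at t within {0..T})"
proof -
  let ?g = "\<lambda>s. exp (- (L2 * s)) * Hfun M L2 c (Suc k) s"
  have d: "((\<lambda>t. integral {0..t} ?g) has_real_derivative ?g t) (at t within {0..T})"
    using integral_has_vector_derivative[OF _ assms, of ?g]
    by (simp add: has_real_derivative_iff_has_vector_derivative continuous_on_Hfun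
        continuous_intros)
  have "((\<lambda>t. c * exp (L2 * t) * integral {0..t} ?g) has_real_derivative
      (c * (exp (L2 * t) * L2) * integral {0..t} ?g + c * exp (L2 * t) * ?g t)) (at t within {0..T})"
    by (rule derivative_eq_intros d refl | simp)+
  moreover have "c * (exp (L2 * t) * L2) * integral {0..t} ?g + c * exp (L2 * t) * ?g t
     = L2 * Hfun M L2 c (Suc (Suc k)) t + c * Hfun M L2 c (Suc k) t"
    by (simp only: Hfun_Suc_Suc_eq) (simp add: algebra_simps exp_minus)
  ultimately show ?thesis
    by (simp only: has_real_derivative_iff_has_vector_derivative Hfun_Suc_Suc_eq[abs_def])
qed

text \<open>For k = 0 both sides vanish, as H_0 = 0.\<close>

lemma Hfun_has_integral:
  assumes "k \<noteq> 1" and "t \<ge> 0"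
  shows "((\<lambda>s. L2 * Hfun M L2 c k s + c * Hfun M L2 c (k - 1) s) has_integral Hfun M L2 c k t) {0..t}"
proof (cases "k = 0")
  case False
  with assms(1) obtain k' where k: "k = Suc (Suc k')"
    by (metis One_nat_def not0_implies_Suc)
  have "((\<lambda>s. L2 * Hfun M L2 c k s + c * Hfun M L2 c (k - 1) s) has_integral
        (Hfun M L2 c k t - Hfun M L2 c k 0)) {0..t}"
    using Hfun_Suc_Suc_has_vector_derivative[of _ t M L2 c k'] unfolding k
    by (intro fundamental_theorem_of_calculus[OF assms(2)]) (simp_all del: Hfun.simps)
  moreover have "Hfun M L2 c k 0 = 0"
    unfolding k by (simp only: Hfun_Suc_Suc_eq) simp
  ultimately show ?thesis by simp
qed simp

lemma Hfun_nonneg: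
  assumes "M \<ge> 0" and "c \<ge> 0" and "t \<ge> 0"
  shows "Hfun M L2 c k t \<ge> 0"
  using assms(3)
proof (induction k arbitrary: t rule: induct_nat_012)
  case (ge2 k)
  have "0 \<le> integral {0..t} (\<lambda>s. exp (- (L2 * s)) * Hfun M L2 c (Suc k) s)"
    by (rule integral_nonneg[OF integrable_continuous_real])
      (auto intro!: continuous_intros continuous_on_Hfun mult_nonneg_nonneg ge2(2))
  with assms ge2 show ?case by (simp only: Hfun_Suc_Suc_eq) simp
qed (use assms in auto)

lemma Hfun_2_eq:
  assumes "t \<ge> 0" and "L2 \<noteq> 0"
  shows "Hfun M L2 c 2 t = c * M * (exp (L2 * t) - 1 - L2 * t) / L2\<^sup>2"
proof -
  let ?F = "\<lambda>s. - M * exp (- (L2 * s)) * (s / L2 + 1 / L2\<^sup>2)"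
  have "((\<lambda>s. exp (- (L2 * s)) * (M * s)) has_integral (?F t - ?F 0)) {0..t}"
  proof (rule fundamental_theorem_of_calculus[OF assms(1)])
    fix s
    have "(?F has_real_derivative exp (- (L2 * s)) * (M * s)) (at s within {0..t})"
      using assms(2) by (auto intro!: derivative_eq_intros simp: field_simps power2_eq_square)
    then show "(?F has_vector_derivative exp (- (L2 * s)) * (M * s)) (at s within {0..t})"
      by (simp add: has_real_derivative_iff_has_vector_derivative)
  qed
  then have "Hfun M L2 c 2 t = c * exp (L2 * t) * (?F t - ?F 0)"
    by (simp only: numeral_2_eq_2 Hfun_Suc_Suc_eq Hfun.simps(2) integral_unique)
  also have "\<dots> = c * M * (exp (L2 * t) - 1 - L2 * t) / L2\<^sup>2"
    using assms(2) by (simp add: field_simps power2_eq_square exp_minus)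
  finally show ?thesis .
qed

text \<open>On [0, t*] the chord of the convex function exp (L2 t) through 0 and t* lies above it; the
  defining equation of t* says precisely that this chord is 1 + (L2 + L2^2 / c) t.\<close>

lemma Hfun_2_le_Hfun_1:
  assumes "L2 > 0" and "c > 0" and "M \<ge> 0" and "ts > 0"
    and ts_eq: "exp (L2 * ts) - (L2 + L2\<^sup>2 / c) * ts - 1 = 0"
    and t: "t \<in> {0..ts}"
  shows "Hfun M L2 c 2 t \<le> Hfun M L2 c 1 t"
proof -
  define \<theta> where "\<theta> = t / ts"
  have \<theta>: "0 \<le> \<theta>" "\<theta> \<le> 1" "t = \<theta> * ts"
    using t \<open>ts > 0\<close> by (auto simp: \<theta>_def)
  have "exp ((1 - \<theta>) *\<^sub>R 0 + \<theta> *\<^sub>R (L2 * ts)) \<le> (1 - \<theta>) * exp 0 + \<theta> * exp (L2 * ts)"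
    by (rule convex_onD[OF exp_convex \<theta>(1,2)]) auto
  then have "exp (L2 * t) \<le> 1 + (L2 + L2\<^sup>2 / c) * t"
    using ts_eq by (simp add: \<theta>(3) algebra_simps)
  then have "c * (exp (L2 * t) - 1 - L2 * t) \<le> L2\<^sup>2 * t"
    using \<open>c > 0\<close> by (simp add: field_simps)
  then have "M * (c * (exp (L2 * t) - 1 - L2 * t)) \<le> M * (L2\<^sup>2 * t)"
    using \<open>M \<ge> 0\<close> by (rule mult_left_mono)
  then have "c * M * (exp (L2 * t) - 1 - L2 * t) \<le> M * t * L2\<^sup>2"
    by (simp add: algebra_simps)
  then show ?thesis
    using Hfun_2_eq[of t L2 M c] t \<open>L2 > 0\<close> by (simp add: divide_le_eq)
qed

lemma Hfun_Suc_le: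
  assumes "L2 > 0" and "c > 0" and "M \<ge> 0" and "ts > 0"
    and "exp (L2 * ts) - (L2 + L2\<^sup>2 / c) * ts - 1 = 0"
    and "t \<in> {0..ts}" and "k \<ge> 1"
  shows "Hfun M L2 c (Suc k) t \<le> Hfun M L2 c k t"
  using assms(7,6)
proof (induction k arbitrary: t rule: nat_induct_at_least)
  case base
  then show ?case using Hfun_2_le_Hfun_1[OF assms(1-5)] by (simp add: numeral_2_eq_2)
next
  case (Suc k)
  then obtain k' where k: "k = Suc k'" by (cases k) auto
  have "integral {0..t} (\<lambda>s. exp (L2 * (t - s)) * c * Hfun M L2 c (Suc k) s)
     \<le> integral {0..t} (\<lambda>s. exp (L2 * (t - s)) * c * Hfun M L2 c k s)"
    using Suc \<open>c > 0\<close>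
    by (intro integral_le integrable_continuous_real continuous_intros continuous_on_Hfun)
      (auto intro!: mult_left_mono)
  then show ?case by (simp add: k)
qed

lemma Hfun_antimono:
  assumes "L2 > 0" and "c > 0" and "M \<ge> 0" and "ts > 0"
    and "exp (L2 * ts) - (L2 + L2\<^sup>2 / c) * ts - 1 = 0"
    and "t \<in> {0..ts}" and "1 \<le> k" and "k \<le> j"
  shows "Hfun M L2 c j t \<le> Hfun M L2 c k t"
  using assms(8)
proof (induction j rule: dec_induct)
  case (step j)
  then show ?case using Hfun_Suc_le[OF assms(1-6), of j] assms(7) by simp
qed simp

section \<open>A Gronwall lemma\<close>

lemma power_has_integral:
  assumes "t \<ge> (0::real)"
  shows "((\<lambda>x. x ^ n) has_integral t ^ Suc n / Suc n) {0..t}"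
proof -
  have "((\<lambda>x. x ^ n) has_integral (t ^ Suc n / Suc n - 0 ^ Suc n / Suc n)) {0..t}"
  proof (rule fundamental_theorem_of_calculus[OF assms])
    fix x :: real
    have "((\<lambda>x. x ^ Suc n / Suc n) has_real_derivative (Suc n * x ^ n / Suc n)) (at x within {0..t})"
      by (rule derivative_eq_intros refl | simp)+
    then show "((\<lambda>x. x ^ Suc n / Suc n) has_vector_derivative x ^ n) (at x within {0..t})"
      by (simp add: has_real_derivative_iff_has_vector_derivative del: of_nat_Suc)
  qed
  then show ?thesis by simp
qed

lemma gronwall_iterate:
  fixes W :: "real \<Rightarrow> real"
  assumes cont: "continuous_on {0..T} W" and "K \<ge> 0"
    and bound: "\<And>t. t \<in> {0..T} \<Longrightarrow> W t \<le> B"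
    and le: "\<And>t. t \<in> {0..T} \<Longrightarrow> W t \<le> K * integral {0..t} W"
    and "t \<in> {0..T}"
  shows "W t \<le> B * (K * t) ^ n / fact n"
  using \<open>t \<in> {0..T}\<close>
proof (induction n arbitrary: t)
  case 0
  then show ?case using bound by simp
next
  case (Suc n)
  have sub: "{0..t} \<subseteq> {0..T}" using Suc.prems by auto
  have "integral {0..t} W \<le> integral {0..t} (\<lambda>x. (B * K ^ n / fact n) * x ^ n)"
    using Suc.IH sub
    by (intro integral_le integrable_continuous_real continuous_on_subset[OF cont sub])
      (auto intro!: continuous_intros simp: power_mult_distrib mult.assoc)
  also have "\<dots> = (B * K ^ n / fact n) * (t ^ Suc n / Suc n)"
    using integral_unique[OF power_has_integral[of t n]] Suc.prems by simp
  finally have "W t \<le> K * ((B * K ^ n / fact n) * (t ^ Suc n / Suc n))"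
    using le[OF Suc.prems] mult_left_mono[OF _ \<open>K \<ge> 0\<close>] by (meson order_trans)
  also have "\<dots> = B * (K * t) ^ Suc n / fact (Suc n)"
    by (simp add: power_mult_distrib field_simps del: of_nat_Suc)
  finally show ?case .
qed

lemma gronwall_zero:
  fixes W :: "real \<Rightarrow> real"
  assumes cont: "continuous_on {0..T} W" and "K \<ge> 0"
    and nonneg: "\<And>t. t \<in> {0..T} \<Longrightarrow> 0 \<le> W t"
    and le: "\<And>t. t \<in> {0..T} \<Longrightarrow> W t \<le> K * integral {0..t} W"
    and t: "t \<in> {0..T}"
  shows "W t = 0"
proof -
  obtain t0 where "t0 \<in> {0..T}" and max: "\<And>s. s \<in> {0..T} \<Longrightarrow> W s \<le> W t0"
    using continuous_attains_sup[OF compact_Icc _ cont] t by auto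
  have "(\<lambda>n. W t0 * (inverse (fact n) * (K * t) ^ n)) \<longlonglongrightarrow> 0"
    by (rule tendsto_mult_right_zero[OF summable_LIMSEQ_zero[OF summable_exp]])
  moreover have "\<forall>n. W t \<le> W t0 * (inverse (fact n) * (K * t) ^ n)"
    using gronwall_iterate[OF cont \<open>K \<ge> 0\<close> max le t] by (simp add: field_simps)
  ultimately have "W t \<le> 0"
    using LIMSEQ_le_const by blast
  then show ?thesis using nonneg[OF t] by simp
qed

lemma nonpos_of_integral_excess_bound:
  fixes e :: "'a \<Rightarrow> real \<Rightarrow> real"
  assumes "finite U" and "K \<ge> 0"
    and cont: "\<And>x. x \<in> U \<Longrightarrow> continuous_on {0..T} (e x)"
    and le: "\<And>x t. x \<in> U \<Longrightarrow> t \<in> {0..T} \<Longrightarrow>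
               e x t \<le> K * integral {0..t} (\<lambda>s. \<Sum>y\<in>U. max 0 (e y s))"
    and "x \<in> U" and "t \<in> {0..T}"
  shows "e x t \<le> 0"
proof -
  define W where "W s = (\<Sum>y\<in>U. max 0 (e y s))" for s
  have cont_W: "continuous_on {0..T} W"
    unfolding W_def by (intro continuous_intros cont)
  have W_nonneg: "0 \<le> W s" for s
    unfolding W_def by (intro sum_nonneg) simp
  have "W s \<le> (card U * K) * integral {0..s} W" if s: "s \<in> {0..T}" for s
  proof -
    have "0 \<le> integral {0..s} W"
      using s by (intro integral_nonneg integrable_continuous_real
          continuous_on_subset[OF cont_W] W_nonneg) auto
    then have "W s \<le> card U * (K * integral {0..s} W)"
      unfolding W_def using le[OF _ s] \<open>K \<ge> 0\<close>
      by (intro sum_bounded_above) (simp add: W_def[abs_def])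
    then show ?thesis by simp
  qed
  then have "W t = 0"
    using \<open>K \<ge> 0\<close> W_nonneg \<open>t \<in> {0..T}\<close>
    by (intro gronwall_zero[where K = "card U * K", OF cont_W]) auto
  moreover have "max 0 (e x t) \<le> W t"
    unfolding W_def by (rule member_le_sum[OF \<open>x \<in> U\<close>]) (auto simp: \<open>finite U\<close>)
  ultimately show ?thesis by simp
qed

section \<open>Walks, layers and balls\<close>

lemma walk_0_iff: "walk nbr j i 0 \<longleftrightarrow> j = i"
  by (auto simp: walk_def)

lemma walk_snoc:
  assumes "walk nbr j k d" and "k \<in> nbr k'"
  shows "walk nbr j k' (Suc d)"
proof -
  obtain p where p: "p 0 = j" "p d = k" "\<forall>q<d. p q \<in> nbr (p (Suc q))"
    using assms(1) by (auto simp: walk_def)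
  have "\<forall>q<Suc d. (p(Suc d := k')) q \<in> nbr ((p(Suc d := k')) (Suc q))"
    using p assms(2) by (auto simp: less_Suc_eq)
  then show ?thesis
    using p unfolding walk_def by (intro exI[of _ "p(Suc d := k')"]) auto
qed

lemma walk_Cons:
  assumes "v \<in> nbr j" and "walk nbr j i d"
  shows "walk nbr v i (Suc d)"
proof -
  obtain p where p: "p 0 = j" "p d = i" "\<forall>q<d. p q \<in> nbr (p (Suc q))"
    using assms(2) by (auto simp: walk_def)
  let ?p = "\<lambda>q. if q = 0 then v else p (q - 1)"
  have "\<forall>q<Suc d. ?p q \<in> nbr (?p (Suc q))"
    using p assms(1) by (auto simp: less_Suc_eq_0_disj)
  then show ?thesis
    using p unfolding walk_def by (intro exI[of _ ?p]) auto
qed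

lemma layer_le_walk:
  assumes "x \<in> layer nbr i m" and "walk nbr x i d"
  shows "m \<le> d"
  using assms by (cases "m = 0") (auto simp: layer_def not_less[symmetric])

lemma mem_layer_Least:
  assumes "walk nbr x i d"
  shows "x \<in> layer nbr i (LEAST d. walk nbr x i d)"
proof -
  define d0 where "d0 = (LEAST d. walk nbr x i d)"
  have w: "walk nbr x i d0"
    unfolding d0_def by (rule LeastI[of "walk nbr x i", OF assms])
  have nw: "\<not> walk nbr x i k" if "k < d0" for k
    using that unfolding d0_def by (rule not_less_Least)
  have "x \<in> layer nbr i d0"
  proof (cases "d0 = 0")
    case True
    then show ?thesis using w by (simp add: layer_def walk_0_iff)
  next
    case False
    then have "x \<noteq> i" using nw[of 0] walk_0_iff[of nbr i i] by auto
    then show ?thesis using False w nw unfolding layer_def by simp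
  qed
  then show ?thesis unfolding d0_def .
qed

lemma mem_nball_iff: "x \<in> nball nbr i m \<longleftrightarrow> (\<exists>d\<le>m. walk nbr x i d)"
proof
  assume "x \<in> nball nbr i m"
  then obtain k where "k \<le> m" "x \<in> layer nbr i k" by (auto simp: nball_def)
  then show "\<exists>d\<le>m. walk nbr x i d"
    by (cases "k = 0") (auto simp: layer_def walk_0_iff)
next
  assume "\<exists>d\<le>m. walk nbr x i d"
  then obtain d where d: "d \<le> m" "walk nbr x i d" by blast
  have "(LEAST d. walk nbr x i d) \<le> d" using d(2) by (rule Least_le)
  then show "x \<in> nball nbr i m"
    using mem_layer_Least[OF d(2)] d(1) by (auto simp: nball_def)
qed

lemma nball_Suc_cases:
  assumes "x \<in> nball nbr i (Suc m)"
  shows "x \<in> nball nbr i m \<or> x \<in> layer nbr i (Suc m)"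
proof -
  obtain d where d: "d \<le> Suc m" "walk nbr x i d"
    using assms by (auto simp: mem_nball_iff)
  let ?d = "LEAST d. walk nbr x i d"
  have "?d \<le> d" using d(2) by (rule Least_le)
  moreover have "walk nbr x i ?d" by (rule LeastI[of "walk nbr x i", OF d(2)])
  ultimately show ?thesis
  proof (cases "?d = Suc m")
    case True
    then show ?thesis using mem_layer_Least[OF d(2)] by simp
  next
    case False
    with \<open>?d \<le> d\<close> d(1) have "?d \<le> m" by simp
    with \<open>walk nbr x i ?d\<close> show ?thesis
      unfolding mem_nball_iff by blast
  qed
qed

lemma nball_Suc_if_nbr:
  assumes "x \<in> nball nbr i k" and "v \<in> nbr x"
  shows "v \<in> nball nbr i (Suc k)"
  using assms walk_Cons[of v nbr x i] by (fastforce simp: mem_nball_iff)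

text \<open>walk_dist nbr A x is a junk value when x is not reachable from A.\<close>

definition reaches :: "('a \<Rightarrow> 'a set) \<Rightarrow> 'a set \<Rightarrow> 'a \<Rightarrow> bool" where
  "reaches nbr A x \<longleftrightarrow> (\<exists>a\<in>A. \<exists>d. walk nbr a x d)"

definition walk_dist :: "('a \<Rightarrow> 'a set) \<Rightarrow> 'a set \<Rightarrow> 'a \<Rightarrow> nat" where
  "walk_dist nbr A x = (LEAST d. \<exists>a\<in>A. walk nbr a x d)"

lemma walk_dist_le:
  assumes "a \<in> A" and "walk nbr a x d"
  shows "walk_dist nbr A x \<le> d"
  unfolding walk_dist_def by (rule Least_le) (use assms in blast)

lemma walk_dist_attained:
  assumes "reaches nbr A x"
  shows "\<exists>a\<in>A. walk nbr a x (walk_dist nbr A x)"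
  unfolding walk_dist_def by (rule LeastI_ex) (use assms in \<open>auto simp: reaches_def\<close>)

lemma walk_dist_eq_0_iff:
  assumes "reaches nbr A x"
  shows "walk_dist nbr A x = 0 \<longleftrightarrow> x \<in> A"
  using walk_dist_attained[OF assms] walk_dist_le[of x A nbr x 0]
  by (auto simp: walk_0_iff)

lemma reaches_nbr:
  assumes "reaches nbr A v" and "v \<in> nbr x"
  shows "reaches nbr A x" and "walk_dist nbr A x \<le> Suc (walk_dist nbr A v)"
proof -
  obtain a where "a \<in> A" and "walk nbr a v (walk_dist nbr A v)"
    using walk_dist_attained[OF assms(1)] by blast
  moreover from this(2) have "walk nbr a x (Suc (walk_dist nbr A v))"
    using assms(2) by (rule walk_snoc)
  ultimately show "reaches nbr A x" and "walk_dist nbr A x \<le> Suc (walk_dist nbr A v)"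
    by (auto simp: reaches_def intro: walk_dist_le)
qed

section \<open>Solutions of ODEs on the half line\<close>

lemma has_integral_vector_derivative_halfline:
  fixes g :: "real \<Rightarrow> 'v::euclidean_space"
  assumes "\<And>s. s \<ge> 0 \<Longrightarrow> (g has_vector_derivative g' s) (at s within {0..})" and "t \<ge> 0"
  shows "(g' has_integral (g t - g 0)) {0..t}"
proof (rule fundamental_theorem_of_calculus[OF assms(2)])
  fix s assume "s \<in> {0..t}"
  then show "(g has_vector_derivative g' s) (at s within {0..t})"
    using assms(1)[of s] by (auto intro: has_vector_derivative_within_subset)
qed

lemma norm_diff_le_integral_of_derivatives:
  fixes g1 g2 :: "real \<Rightarrow> 'v::euclidean_space"
  assumes "\<And>s. s \<ge> 0 \<Longrightarrow> (g1 has_vector_derivative g1' s) (at s within {0..})"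
    and "\<And>s. s \<ge> 0 \<Longrightarrow> (g2 has_vector_derivative g2' s) (at s within {0..})"
    and "g1 0 = g2 0" and "t \<ge> 0"
    and "h integrable_on {0..t}"
    and "\<And>s. s \<in> {0..t} \<Longrightarrow> norm (g1' s - g2' s) \<le> h s"
  shows "norm (g1 t - g2 t) \<le> integral {0..t} h"
proof -
  have "((\<lambda>s. g1' s - g2' s) has_integral (g1 t - g2 t)) {0..t}"
    using has_integral_diff[OF has_integral_vector_derivative_halfline[OF assms(1,4)]
        has_integral_vector_derivative_halfline[OF assms(2,4)]] assms(3)
    by simp
  then show ?thesis
    using integral_norm_bound_integral[OF has_integral_integrable assms(5,6)]
    by (simp add: integral_unique)
qed

lemma sqrt_sum_norm_squares_le:
  fixes x :: "'a \<Rightarrow> 'v::real_normed_vector"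
  assumes "finite A" and "0 \<le> B" and "\<And>a. a \<in> A \<Longrightarrow> norm (x a) \<le> B"
  shows "sqrt (\<Sum>a\<in>A. (norm (x a))\<^sup>2) \<le> sqrt (card A) * B"
proof -
  have "(\<Sum>a\<in>A. (norm (x a))\<^sup>2) \<le> card A * B\<^sup>2"
    using assms by (intro sum_bounded_above power_mono) auto
  then have "sqrt (\<Sum>a\<in>A. (norm (x a))\<^sup>2) \<le> sqrt (card A * B\<^sup>2)"
    by (rule real_sqrt_le_mono)
  then show ?thesis
    using \<open>0 \<le> B\<close> by (simp add: real_sqrt_mult)
qed

section \<open>Reference trajectories\<close>

definition frozen :: "('a \<Rightarrow> 'a set) \<Rightarrow> nat \<Rightarrow> 'a \<Rightarrow> 'a set" where
  "frozen nbr m i = (if layer nbr i (Suc m) = {} then {} else layer nbr i m)"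

lemma frozen_subset_layer: "frozen nbr m i \<subseteq> layer nbr i m"
  by (simp add: frozen_def)

lemma ref_traj_frozen:
  assumes "ref_traj nbr f xG m i cfg chi" and "x \<in> frozen nbr m i" and "t \<ge> 0"
  shows "chi x t = xG (cfg x)"
  using assms by (auto simp: ref_traj_def frozen_def split: if_splits)

lemma ode_on_subset: "ode_on f xG cfg K chi \<Longrightarrow> K' \<subseteq> K \<Longrightarrow> ode_on f xG cfg K' chi"
  unfolding ode_on_def by blast

lemma ref_traj_active:
  assumes traj: "ref_traj nbr f xG m i cfg chi" and "m \<ge> 1"
    and x: "x \<in> nball nbr i m" "x \<notin> frozen nbr m i"
  shows "ode_on f xG cfg {x} chi" and "nbr x \<subseteq> nball nbr i m"
proof -
  have "ode_on f xG cfg {x} chi \<and> nbr x \<subseteq> nball nbr i m"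
  proof (cases "layer nbr i (Suc m) = {}")
    case True
    have "nbr x \<subseteq> nball nbr i m"
    proof
      fix v assume "v \<in> nbr x"
      then have "v \<in> nball nbr i (Suc m)" by (rule nball_Suc_if_nbr[OF x(1)])
      with True show "v \<in> nball nbr i m"
        using nball_Suc_cases[of v nbr i m] by simp
    qed
    moreover have "ode_on f xG cfg (nball nbr i m) chi"
      using traj True by (simp add: ref_traj_def)
    ultimately show ?thesis
      using x(1) ode_on_subset[of f xG cfg _ chi "{x}"] by simp
  next
    case False
    obtain m' where m: "m = Suc m'" using \<open>m \<ge> 1\<close> by (cases m) auto
    have x': "x \<in> nball nbr i m'"
      using nball_Suc_cases[of x nbr i m'] x False by (simp add: m frozen_def)
    have "nbr x \<subseteq> nball nbr i m"
      using nball_Suc_if_nbr[OF x'] by (auto simp: m)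
    moreover have "ode_on f xG cfg (nball nbr i m') chi"
      using traj False by (simp add: ref_traj_def m)
    ultimately show ?thesis
      using x' ode_on_subset[of f xG cfg _ chi "{x}"] by simp
  qed
  then show "ode_on f xG cfg {x} chi" and "nbr x \<subseteq> nball nbr i m"
    by auto
qed

lemma ref_traj_initial:
  assumes "ref_traj nbr f xG m i cfg chi" and "m \<ge> 1" and "x \<in> nball nbr i m"
  shows "chi x 0 = xG (cfg x)"
  using ref_traj_frozen[OF assms(1)] ref_traj_active(1)[OF assms] by (auto simp: ode_on_def)

lemma ref_traj_continuous:
  assumes "ref_traj nbr f xG m i cfg chi" and "m \<ge> 1" and "x \<in> nball nbr i m"
  shows "continuous_on {0..} (chi x)"
proof (cases "x \<in> frozen nbr m i")
  case True
  show ?thesis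
    by (rule continuous_on_eq[OF continuous_on_const]) (use ref_traj_frozen[OF assms(1) True] in auto)
next
  case False
  then show ?thesis
    using ref_traj_active(1)[OF assms False]
    by (intro continuous_on_vector_derivative) (auto simp: ode_on_def)
qed

lemma ref_traj_speed:
  assumes "ref_traj nbr f xG m i cfg chi" and "m \<ge> 1" and "x \<in> nball nbr i m"
    and f_bound: "\<And>j p y. norm (f j p y) \<le> M" and "t \<ge> 0"
  shows "norm (chi x t - chi x 0) \<le> M * t"
proof (cases "x \<in> frozen nbr m i")
  case True
  have "0 \<le> M" using f_bound norm_ge_zero order_trans by metis
  then show ?thesis
    using ref_traj_frozen[OF assms(1) True] \<open>t \<ge> 0\<close> by simp
next
  case False
  have "norm (chi x t - chi x 0) \<le> integral {0..t} (\<lambda>_. M)"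
    using ref_traj_active(1)[OF assms(1-3) False] f_bound \<open>t \<ge> 0\<close>
    by (intro norm_diff_le_integral_of_derivatives[where g2' = "\<lambda>_. 0"]) (auto simp: ode_on_def)
  then show ?thesis using \<open>t \<ge> 0\<close> by (simp add: mult.commute)
qed

section \<open>Two neighbouring views\<close>

locale two_views =
  fixes nbr :: "'a::finite \<Rightarrow> 'a set"
    and f :: "'a \<Rightarrow> 'v::euclidean_space \<Rightarrow> ('a \<Rightarrow> 'v) \<Rightarrow> 'v"
    and xG :: "'c \<Rightarrow> 'v" and M L1 L2 tstar :: real and m :: nat and i l :: 'a
    and cfg_i cfg_l :: "'a \<Rightarrow> 'c" and chi_i chi_l :: "'a \<Rightarrow> real \<Rightarrow> 'v"
  assumes L1_pos: "L1 > 0" and L2_pos: "L2 > 0"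
    and f_bound: "\<And>j x y. norm (f j x y) \<le> M"
    and f_lip1: "\<And>j x y z. norm (f j x y - f j x z)
                   \<le> L1 * sqrt (\<Sum>v\<in>nbr j. (norm (y v - z v))\<^sup>2)"
    and f_lip2: "\<And>j x x' y. norm (f j x y - f j x' y) \<le> L2 * norm (x - x')"
    and m_pos: "m \<ge> 1"
    and l_nbr: "l \<in> nbr i"
    and consistent: "\<forall>k \<in> nball nbr i m \<inter> nball nbr l m. cfg_i k = cfg_l k"
    and traj_i: "ref_traj nbr f xG m i cfg_i chi_i"
    and traj_l: "ref_traj nbr f xG m l cfg_l chi_l"
    and tstar_pos: "tstar > 0"
    and tstar_eq: "exp (L2 * tstar)
        - (L2 + L2\<^sup>2 / (L1 * sqrt (real (Max (range (\<lambda>j. card (nbr j))))))) * tstar - 1 = 0"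
begin

definition c :: real where
  "c = L1 * sqrt (real (Max (range (\<lambda>j. card (nbr j)))))"

abbreviation H :: "nat \<Rightarrow> real \<Rightarrow> real" where
  "H \<equiv> Hfun M L2 c"

lemma M_nonneg: "M \<ge> 0"
  using f_bound norm_ge_zero order_trans by metis

lemma card_nbr_le_Max: "card (nbr j) \<le> Max (range (\<lambda>j. card (nbr j)))"
  by (rule Max_ge) auto

lemma c_pos: "c > 0"
proof -
  have "card (nbr i) \<ge> 1"
    using l_nbr by (metis One_nat_def Suc_leI card_gt_0_iff empty_iff finite)
  then have "Max (range (\<lambda>j. card (nbr j))) \<ge> 1"
    using card_nbr_le_Max[of i] by linarith
  then show ?thesis
    using L1_pos by (simp add: c_def)
qed

lemma H_nonneg: "t \<ge> 0 \<Longrightarrow> 0 \<le> H k t"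
  using Hfun_nonneg M_nonneg c_pos by simp

lemma H_antimono: "t \<in> {0..tstar} \<Longrightarrow> 1 \<le> k \<Longrightarrow> k \<le> j \<Longrightarrow> H j t \<le> H k t"
  using Hfun_antimono[OF L2_pos c_pos M_nonneg tstar_pos] tstar_eq by (simp add: c_def)

lemma force_diff_le:
  assumes "0 \<le> B" and "\<And>v. v \<in> nbr x \<Longrightarrow> norm (y v - z v) \<le> B"
  shows "norm (f x p y - f x q z) \<le> L2 * norm (p - q) + c * B"
proof -
  have "sqrt (\<Sum>v\<in>nbr x. (norm (y v - z v))\<^sup>2) \<le> sqrt (card (nbr x)) * B"
    using assms by (intro sqrt_sum_norm_squares_le) auto
  also have "\<dots> \<le> sqrt (Max (range (\<lambda>j. card (nbr j)))) * B"
    using card_nbr_le_Max[of x] assms(1) by (intro mult_right_mono) auto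
  finally have "L1 * sqrt (\<Sum>v\<in>nbr x. (norm (y v - z v))\<^sup>2) \<le> c * B"
    using L1_pos by (simp add: c_def mult.assoc mult_left_mono)
  then show ?thesis
    using norm_diff_triangle_le[OF f_lip1[of x p y z] f_lip2[of x p z q]] by simp
qed

definition shared :: "'a set" where
  "shared = nball nbr i m \<inter> nball nbr l m"

definition frozen_shared :: "'a set" where
  "frozen_shared = shared \<inter> (frozen nbr m i \<union> frozen nbr m l)"

text \<open>H (level x) is the bound on the discrepancy at x; level 0 (H_0 = 0) covers the agents that
  no frozen agent influences.\<close>

definition level :: "'a \<Rightarrow> nat" where
  "level x = (if reaches nbr frozen_shared x then Suc (walk_dist nbr frozen_shared x) else 0)"

definition gap :: "'a \<Rightarrow> real \<Rightarrow> real" where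
  "gap x t = norm (chi_i x t - chi_l x t)"

definition excess :: "'a \<Rightarrow> real \<Rightarrow> real" where
  "excess x t = gap x t - H (level x) t"

lemma l_shared: "l \<in> shared"
proof -
  have "walk nbr l i 1"
    using walk_Cons[of l nbr i i 0] l_nbr by (simp add: walk_0_iff)
  then show ?thesis
    using m_pos walk_0_iff[of nbr l l] by (auto simp: shared_def mem_nball_iff)
qed

lemma active_agent:
  assumes "x \<in> shared" and "x \<notin> frozen_shared"
  shows "ode_on f xG cfg_i {x} chi_i" and "ode_on f xG cfg_l {x} chi_l" and "nbr x \<subseteq> shared"
  using ref_traj_active[OF traj_i m_pos] ref_traj_active[OF traj_l m_pos] assms
  by (auto simp: shared_def frozen_shared_def)

lemma initial_eq: "x \<in> shared \<Longrightarrow> chi_i x 0 = chi_l x 0"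
  using ref_traj_initial[OF traj_i m_pos] ref_traj_initial[OF traj_l m_pos] consistent
  by (auto simp: shared_def)

lemma continuous_on_gap:
  assumes "x \<in> shared"
  shows "continuous_on {0..T} (gap x)"
proof -
  have "continuous_on {0..} (gap x)"
    using ref_traj_continuous[OF traj_i m_pos] ref_traj_continuous[OF traj_l m_pos] assms
    unfolding gap_def[abs_def] by (intro continuous_intros) (auto simp: shared_def)
  then show ?thesis by (rule continuous_on_subset) auto
qed

lemma continuous_on_excess: "x \<in> shared \<Longrightarrow> continuous_on {0..T} (excess x)"
  unfolding excess_def[abs_def] by (intro continuous_intros continuous_on_gap continuous_on_Hfun)

lemma level_frozen: "x \<in> frozen_shared \<Longrightarrow> level x = 1"
  using walk_dist_le[of x frozen_shared nbr x 0] walk_0_iff[of nbr x x]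
  by (auto simp: level_def reaches_def)

lemma level_active: "x \<notin> frozen_shared \<Longrightarrow> level x \<noteq> 1"
  using walk_dist_eq_0_iff[of nbr frozen_shared x] by (auto simp: level_def)

lemma H_level_nbr_le:
  assumes "x \<notin> frozen_shared" and "v \<in> nbr x" and "t \<in> {0..tstar}"
  shows "H (level v) t \<le> H (level x - 1) t"
proof (cases "reaches nbr frozen_shared v")
  case True
  have x: "reaches nbr frozen_shared x"
    and le: "walk_dist nbr frozen_shared x \<le> Suc (walk_dist nbr frozen_shared v)"
    using reaches_nbr[OF True assms(2)] by simp_all
  moreover have "walk_dist nbr frozen_shared x \<noteq> 0"
    using walk_dist_eq_0_iff[OF x] assms(1) by simp
  ultimately show ?thesis
    using True H_antimono[OF assms(3)] by (simp add: level_def)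
next
  case False
  then show ?thesis using H_nonneg assms(3) by (simp add: level_def)
qed

lemma H_level_l_le:
  assumes "t \<in> {0..tstar}"
  shows "H (level l) t \<le> H m t"
proof (cases "reaches nbr frozen_shared l")
  case True
  then obtain a where a: "a \<in> frozen_shared" "walk nbr a l (walk_dist nbr frozen_shared l)"
    using walk_dist_attained[OF True] by blast
  have "m \<le> Suc (walk_dist nbr frozen_shared l)"
  proof (cases "a \<in> frozen nbr m i")
    case True
    then have "a \<in> layer nbr i m" by (rule frozen_subset_layer[THEN subsetD])
    then show ?thesis using walk_snoc[OF a(2) l_nbr] by (rule layer_le_walk)
  next
    case False
    then have "a \<in> frozen nbr m l" using a(1) by (simp add: frozen_shared_def)
    then have "a \<in> layer nbr l m" by (rule frozen_subset_layer[THEN subsetD])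
    then have "m \<le> walk_dist nbr frozen_shared l" using a(2) by (rule layer_le_walk)
    then show ?thesis by simp
  qed
  then show ?thesis using H_antimono[OF assms m_pos] True by (simp add: level_def)
next
  case False
  then show ?thesis using H_nonneg assms by (simp add: level_def)
qed

text \<open>At a frozen agent one of the two trajectories stays at the common initial point while the
  other moves with speed at most M.\<close>

lemma excess_frozen:
  assumes "x \<in> frozen_shared" and "t \<ge> 0"
  shows "excess x t \<le> 0"
proof -
  have x: "x \<in> shared" "x \<in> nball nbr i m" "x \<in> nball nbr l m"
    using assms(1) by (auto simp: frozen_shared_def shared_def)
  have "gap x t \<le> M * t"
  proof (cases "x \<in> frozen nbr m i")
    case True
    then have "chi_i x t = chi_l x 0"
      using ref_traj_frozen[OF traj_i True] initial_eq[OF x(1)] assms(2) by force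
    then show ?thesis
      using ref_traj_speed[OF traj_l m_pos x(3) f_bound assms(2)]
      by (simp add: gap_def norm_minus_commute)
  next
    case False
    then have "x \<in> frozen nbr m l" using assms(1) by (simp add: frozen_shared_def)
    then have "chi_l x t = chi_i x 0"
      using ref_traj_frozen[OF traj_l] initial_eq[OF x(1)] assms(2) by force
    then show ?thesis
      using ref_traj_speed[OF traj_i m_pos x(2) f_bound assms(2)] by (simp add: gap_def)
  qed
  then show ?thesis using level_frozen[OF assms(1)] by (simp add: excess_def)
qed

definition total_excess :: "real \<Rightarrow> real" where
  "total_excess s = (\<Sum>y\<in>shared. max 0 (excess y s))"

lemma excess_le_total_excess: "y \<in> shared \<Longrightarrow> excess y s \<le> total_excess s"
  using member_le_sum[of y shared "\<lambda>y. max 0 (excess y s)"] by (simp add: total_excess_def)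

lemma total_excess_nonneg: "0 \<le> total_excess s"
  unfolding total_excess_def by (intro sum_nonneg) simp

lemma continuous_on_total_excess: "continuous_on {0..T} total_excess"
  unfolding total_excess_def[abs_def]
  by (intro continuous_on_sum continuous_on_max continuous_on_const continuous_on_excess)

lemma integral_total_excess_nonneg: "0 \<le> integral {0..t} total_excess"
  by (intro integral_nonneg integrable_continuous_real continuous_on_total_excess
      total_excess_nonneg)

lemma gap_nbr_le:
  assumes "x \<in> shared" and "x \<notin> frozen_shared" and "v \<in> nbr x" and "s \<in> {0..tstar}"
  shows "gap v s \<le> H (level x - 1) s + total_excess s"
  using H_level_nbr_le[OF assms(2-4)] excess_le_total_excess[of v s] active_agent(3)[OF assms(1,2)]
    assms(3)
  by (auto simp: excess_def)

lemma gap_active_le_integral: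
  assumes x: "x \<in> shared" "x \<notin> frozen_shared" and t: "t \<in> {0..tstar}"
  shows "gap x t \<le> integral {0..t} (\<lambda>s. L2 * gap x s + c * (H (level x - 1) s + total_excess s))"
proof -
  have force: "norm (f x (chi_i x s) (\<lambda>v. chi_i v s) - f x (chi_l x s) (\<lambda>v. chi_l v s))
      \<le> L2 * gap x s + c * (H (level x - 1) s + total_excess s)" if s: "s \<in> {0..t}" for s
    unfolding gap_def
  proof (rule force_diff_le)
    show "0 \<le> H (level x - 1) s + total_excess s"
      using H_nonneg total_excess_nonneg s by (simp add: add_nonneg_nonneg)
    show "norm (chi_i v s - chi_l v s) \<le> H (level x - 1) s + total_excess s" if "v \<in> nbr x" for v
      using gap_nbr_le[OF x that] s t by (simp add: gap_def)
  qed
  show ?thesis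
    unfolding gap_def[of x t]
    using active_agent(1,2)[OF x] initial_eq[OF x(1)] t force
    by (intro norm_diff_le_integral_of_derivatives integrable_continuous_real continuous_intros
        continuous_on_gap continuous_on_Hfun continuous_on_total_excess x(1))
      (auto simp: ode_on_def)
qed

text \<open>Subtracting the recursion H_k = \<integral> (L2 H_k + c H_(k-1)) from the previous bound leaves
  only the excesses.\<close>

lemma excess_active:
  assumes x: "x \<in> shared" "x \<notin> frozen_shared" and t: "t \<in> {0..tstar}"
  shows "excess x t \<le> (L2 + c) * integral {0..t} total_excess"
proof -
  let ?\<beta> = "H (level x - 1)"
  have cont: "continuous_on {0..t} total_excess" "continuous_on {0..t} ?\<beta>"
    "continuous_on {0..t} (gap x)" "continuous_on {0..t} (H (level x))"
    "continuous_on {0..t} (excess x)"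
    by (simp_all add: continuous_on_total_excess continuous_on_Hfun continuous_on_gap
        continuous_on_excess x)
  have "((\<lambda>s. L2 * H (level x) s + c * ?\<beta> s) has_integral H (level x) t) {0..t}"
    using level_active[OF x(2)] t by (intro Hfun_has_integral) auto
  then have "excess x t \<le> integral {0..t} (\<lambda>s. L2 * gap x s + c * (?\<beta> s + total_excess s))
      - integral {0..t} (\<lambda>s. L2 * H (level x) s + c * ?\<beta> s)"
    using gap_active_le_integral[OF x t] by (simp add: excess_def integral_unique)
  also have "\<dots> = integral {0..t} (\<lambda>s. (L2 * gap x s + c * (?\<beta> s + total_excess s))
      - (L2 * H (level x) s + c * ?\<beta> s))"
    by (rule integral_diff[symmetric]; intro integrable_continuous_real continuous_intros cont)
  also have "\<dots> = integral {0..t} (\<lambda>s. L2 * excess x s + c * total_excess s)"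
    by (simp add: excess_def algebra_simps)
  also have "\<dots> \<le> integral {0..t} (\<lambda>s. (L2 + c) * total_excess s)"
    using cont excess_le_total_excess[OF x(1)] L2_pos
    by (intro integral_le integrable_continuous_real continuous_intros)
      (auto simp: algebra_simps intro: mult_left_mono)
  finally show ?thesis by simp
qed

lemma gap_le_H_level:
  assumes "x \<in> shared" and "t \<in> {0..tstar}"
  shows "gap x t \<le> H (level x) t"
proof -
  have "excess x t \<le> 0"
  proof (rule nonpos_of_integral_excess_bound[where e = excess and U = shared and T = tstar])
    show "finite shared" by simp
    show "0 \<le> L2 + c" using L2_pos c_pos by simp
    show "continuous_on {0..tstar} (excess y)" if "y \<in> shared" for y
      using that by (rule continuous_on_excess)
    show "x \<in> shared" and "t \<in> {0..tstar}" by (fact assms)+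
    fix y s assume y: "y \<in> shared" and s: "s \<in> {0..tstar}"
    have "excess y s \<le> (L2 + c) * integral {0..s} total_excess"
    proof (cases "y \<in> frozen_shared")
      case True
      have "excess y s \<le> 0" using excess_frozen[OF True] s by simp
      also have "0 \<le> (L2 + c) * integral {0..s} total_excess"
        using L2_pos c_pos integral_total_excess_nonneg by simp
      finally show ?thesis .
    next
      case False
      then show ?thesis using excess_active y s by blast
    qed
    then show "excess y s \<le> (L2 + c) * integral {0..s} (\<lambda>s. \<Sum>y\<in>shared. max 0 (excess y s))"
      by (simp add: total_excess_def[abs_def])
  qed
  then show ?thesis by (simp add: excess_def)
qed

theorem discrepancy_le_H:
  assumes "t \<in> {0..tstar}"
  shows "norm (chi_i l t - chi_l l t) \<le> H m t"
  using gap_le_H_level[OF l_shared assms] H_level_l_le[OF assms] by (simp add: gap_def)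

end

theorem proposition1:
  fixes nbr :: "'a::finite \<Rightarrow> 'a set"
    and f :: "'a \<Rightarrow> real^'n \<Rightarrow> ('a \<Rightarrow> real^'n) \<Rightarrow> real^'n"
    and S :: "'c \<Rightarrow> (real^'n) set" and xG :: "'c \<Rightarrow> real^'n"
    and M L1 L2 tstar :: real and m :: nat and i l :: 'a
    and cfg_i cfg_l :: "'a \<Rightarrow> 'c"
    and chi_i chi_l :: "'a \<Rightarrow> real \<Rightarrow> real^'n"
  assumes nbr_irrefl: "\<And>j. j \<notin> nbr j"
    and M_pos: "M > 0" and L1_pos: "L1 > 0" and L2_pos: "L2 > 0"
    and f_bound: "\<And>j x y. norm (f j x y) \<le> M"
    and f_lip1: "\<And>j x y z. norm (f j x y - f j x z)
                   \<le> L1 * sqrt (\<Sum>v\<in>nbr j. (norm (y v - z v))\<^sup>2)"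
    and f_lip2: "\<And>j x x' y. norm (f j x y - f j x' y) \<le> L2 * norm (x - x')"
    and cells: "cell_decomp S xG"
    and m_pos: "m \<ge> 1"
    and l_nbr: "l \<in> nbr i"
    and consistent: "\<forall>k \<in> nball nbr i m \<inter> nball nbr l m. cfg_i k = cfg_l k"
    and traj_i: "ref_traj nbr f xG m i cfg_i chi_i"
    and traj_l: "ref_traj nbr f xG m l cfg_l chi_l"
    and tstar_pos: "tstar > 0"
    and tstar_eq: "exp (L2 * tstar)
        - (L2 + L2\<^sup>2 / (L1 * sqrt (real (Max (range (\<lambda>j. card (nbr j))))))) * tstar - 1 = 0"
  shows "\<forall>t\<in>{0..tstar}. norm (chi_i l t - chi_l l t)
           \<le> Hfun M L2 (L1 * sqrt (real (Max (range (\<lambda>j. card (nbr j)))))) m t"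
proof -
  interpret two_views nbr f xG M L1 L2 tstar m i l cfg_i cfg_l chi_i chi_l
    by unfold_locales (fact L1_pos L2_pos f_bound f_lip1 f_lip2 m_pos l_nbr consistent traj_i
        traj_l tstar_pos tstar_eq)+
  show ?thesis
    using discrepancy_le_H by (simp add: c_def)
qed

end
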